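(* For every $g\in C^\infty(\mathcal G_H)$ and $z\in\mathbb D_H^\circ$, $$(I_0^H)^\sharp g(z)=\Big(d^{1/2}\,(I_0^E)^\sharp\big[\mu^{-2}\,\tilde g\big]\Big)(\Phi(z)),\qquad \tilde g(\beta,\alpha):=g(\beta,\tan\alpha).$$
   Context: $\mathbb D_H^\circ=\{|z|<1\}$ with Poincaré metric $g_H=c^{-2}|dz|^2$, $c=(1-|z|^2)/2$; $\mathcal G_H=\mathbb S^1_\beta\times\mathbb R_a$, $\gamma_{\beta,a}(t)=e^{i\beta}\frac{(2+ia)\tanh(t/2)+ia}{ia\tanh(t/2)-2+ia}$ (unit-speed geodesics). $(I_0^H)^\sharp g(z)=\int_{S_z\mathbb D_H}g(\pi_H(z,w))\,dS_z(w)$, where $\pi_H(z,w)$ is the unique $(\beta,a)$ such that $\gamma_{\beta,a}$ passes through $z$ with velocity $w$, and $dS_z$ is the arclength measure on the $g_H$-unit circle at $z$. $\Phi(z)=\frac{2z}{1+|z|^2}$ maps $\mathbb D_H^\circ$ onto the open Euclidean unit disk; $d(z)=1-|z|^2$. On $(\partial_+S\mathbb D_E)^\circ=\mathbb S^1_\beta\times(-\pi/2,\pi/2)_\alpha$ (point $e^{i\beta}$, direction $e^{i(\beta+\pi+\alpha)}$), $\mu(\beta,\alpha)=\cos\alpha$, and the Euclidean backprojection is $(I_0^E)^\sharp h(y)=\int_0^{2\pi}h(\beta(y,\theta),\alpha(y,\theta))d\theta$ for $y$ in the open disk, where $(\beta(y,\theta),\alpha(y,\theta))$ is the entry point/direction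 of the line through $y$ with direction $e^{i\theta}$ (so $\theta\equiv\beta+\pi+\alpha$). *)

theory Defs
  imports "HOL-Analysis.Analysis"
begin

text \<open>C-infinity functions on the plane (coinductively: differentiable everywhere,
  and every directional derivative is again C-infinity).\<close>
coinductive smooth2 :: "(real \<times> real \<Rightarrow> real) \<Rightarrow> bool" where
  "(\<forall>x. (f has_derivative f' x) (at x)) \<Longrightarrow> (\<forall>v. smooth2 (\<lambda>x. f' x v)) \<Longrightarrow> smooth2 f"

text \<open>Functions on S^1_beta x R_a, lifted to 2pi-periodic functions of (beta, a).\<close>
definition smooth_on_GH :: "(real \<times> real \<Rightarrow> real) \<Rightarrow> bool" where
  "smooth_on_GH g \<longleftrightarrow> smooth2 g \<and> (\<forall>\<beta> a. g (\<beta> + 2*pi, a) = g (\<beta>, a))"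

definition cH :: "complex \<Rightarrow> real" where
  "cH z = (1 - (cmod z)^2) / 2"

text \<open>Unit-speed hyperbolic geodesics gamma_{beta,a}(t).\<close>
definition gammaH :: "real \<Rightarrow> real \<Rightarrow> real \<Rightarrow> complex" where
  "gammaH \<beta> a t = cis \<beta> *
     (((2 + \<i> * of_real a) * of_real (tanh (t/2)) + \<i> * of_real a) /
      (\<i> * of_real a * of_real (tanh (t/2)) - 2 + \<i> * of_real a))"

definition piH :: "complex \<Rightarrow> complex \<Rightarrow> real \<times> real" where
  "piH z w = (THE (\<beta>, a). \<beta> \<in> {0..<2*pi} \<and>
      (\<exists>t. gammaH \<beta> a t = z \<and> (gammaH \<beta> a has_vector_derivative w) (at t)))"

text \<open>Hyperbolic backprojection: integral over the g_H-unit circle {w. |w| = c(z)} at z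
  w.r.t. its g_H-arclength; parametrising w = c(z) e^{i phi}, this arclength is d phi.\<close>
definition backprojH :: "(real \<times> real \<Rightarrow> real) \<Rightarrow> complex \<Rightarrow> real" where
  "backprojH g z = integral {0..2*pi} (\<lambda>\<phi>. g (piH z (of_real (cH z) * cis \<phi>)))"

definition PhiM :: "complex \<Rightarrow> complex" where
  "PhiM z = 2 * z / of_real (1 + (cmod z)^2)"

definition dfun :: "complex \<Rightarrow> real" where
  "dfun z = 1 - (cmod z)^2"

definition muE :: "real \<times> real \<Rightarrow> real" where
  "muE p = cos (snd p)"

text \<open>Entry point/direction (beta, alpha) of the line through y with direction e^{i theta}:
  entry point e^{i beta}, direction e^{i(beta+pi+alpha)} = e^{i theta}.\<close>
definition entryE :: "complex \<Rightarrow> real \<Rightarrow> real \<times> real" where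
  "entryE y \<theta> = (THE (\<beta>, \<alpha>). \<beta> \<in> {0..<2*pi} \<and> \<alpha> \<in> {-pi/2<..<pi/2} \<and>
      cis (\<beta> + pi + \<alpha>) = cis \<theta> \<and> (\<exists>s\<ge>0. y = cis \<beta> + of_real s * cis \<theta>))"

definition backprojE :: "(real \<times> real \<Rightarrow> real) \<Rightarrow> complex \<Rightarrow> real" where
  "backprojE h y = integral {0..2*pi} (\<lambda>\<theta>. h (entryE y \<theta>))"

definition gtilde :: "(real \<times> real \<Rightarrow> real) \<Rightarrow> real \<times> real \<Rightarrow> real" where
  "gtilde g p = g (fst p, tan (snd p))"

end

theory Submission
  imports Defs "HOL-Library.Periodic_Fun"
begin

(* Write z = r e^(i psi) with 0 <= r < 1, put k = (1 + r^2) / (1 - r^2), and let sigma be the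
   continuous angle with tan (sigma u) = k tan u and sigma (u + 2 pi) = sigma u + 2 pi.
   The hyperbolic geodesic through z with direction e^(i (psi + u)) and the Euclidean line
   through Phi z = (2 r / (1 + r^2)) e^(i psi) with direction e^(i (psi + sigma u)) enter the
   disk at the same boundary point e^(i psi) (r - e^(i u)) / (1 - r e^(i u)), and the geodesic
   parameter a is tan alpha, alpha being the entry angle of the line.  Hence the integrand of
   the Euclidean backprojection at theta = psi + sigma u is mu^-2 g~ = (1 + a^2) g, while
   sigma' u = k / (1 + a^2).  Substituting theta = psi + sigma u (which runs over a full period)
   gives k times the hyperbolic backprojection, and k = d (Phi z)^(-1/2). *)

section \<open>Hyperbolic geodesics\<close>

lemma Arg2pi_cis: "\<beta> \<in> {0..<2*pi} \<Longrightarrow> Arg2pi (cis \<beta>) = \<beta>"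
  by (intro Arg2pi_unique[of 1]) (auto simp: cis_conv_exp)

lemma cis_Arg2pi_cis: "cis (Arg2pi (cis x)) = cis x"
  using complex_norm_eq_1_exp[of "cis x"] by (simp add: cis_conv_exp)

lemma cis_mult_cnj_cis_mult: "cis \<beta> * x * cnj (cis \<beta> * y) = x * cnj y"
proof -
  have "cis \<beta> * cnj (cis \<beta>) = 1" by (simp add: cis_cnj cis_mult)
  then show ?thesis by (simp add: algebra_simps)
qed

lemma tanh_artanh_real:
  assumes "\<bar>x::real\<bar> < 1" shows "tanh (artanh x) = x"
proof -
  define q where "q = sqrt ((1 + x) / (1 - x))"
  have "q > 0" "q^2 * (1 - x) = 1 + x" using assms by (auto simp: q_def)
  moreover have "artanh x = ln q"
    using assms by (simp add: artanh_def q_def ln_sqrt)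
  moreover have "1 + q^2 \<noteq> 0" using add_pos_nonneg[of 1 "q^2"] by simp
  ultimately show ?thesis by (simp add: tanh_ln_real divide_eq_eq algebra_simps)
qed

definition geod_point :: "real \<Rightarrow> real \<Rightarrow> complex" where
  "geod_point a s = Complex (2 * s) (a * (1 + s)) / Complex (-2) (a * (1 + s))"

definition geod_velocity :: "real \<Rightarrow> real \<Rightarrow> complex" where
  "geod_velocity a s = of_real (-2 * (1 - s^2)) / (Complex (-2) (a * (1 + s)))^2"

lemma gammaH_eq_geod_point: "gammaH \<beta> a t = cis \<beta> * geod_point a (tanh (t/2))"
proof -
  have "(2 + \<i> * a) * s + \<i> * a = Complex (2 * s) (a * (1 + s))"
    and "\<i> * a * s - 2 + \<i> * a = Complex (-2) (a * (1 + s))" for s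
    by (simp_all add: complex_eq_iff algebra_simps)
  then show ?thesis by (simp add: gammaH_def geod_point_def)
qed

lemma gammaH_has_vector_derivative:
  "(gammaH \<beta> a has_vector_derivative cis \<beta> * geod_velocity a (tanh (t/2))) (at t)"
proof -
  define s where "s = tanh (t/2)"
  let ?D = "\<i> * of_real a * of_real s - 2 + \<i> * of_real a"
  let ?h = "\<lambda>\<zeta>. cis \<beta> * (((2 + \<i> * a) * \<zeta> + \<i> * a) / (\<i> * a * \<zeta> - 2 + \<i> * a))"
  have D: "?D = Complex (-2) (a * (1 + s))"
    by (simp add: complex_eq_iff algebra_simps)
  then have "?D \<noteq> 0" by (simp add: complex_eq_iff)
  have "((\<lambda>t. of_real (tanh (t/2))) has_vector_derivative of_real ((1 - s^2) / 2)) (at t)"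
    unfolding s_def by (auto intro!: derivative_eq_intros)
  moreover have "(?h has_field_derivative cis \<beta> * (-4 / ?D^2)) (at (of_real s))"
    using \<open>?D \<noteq> 0\<close> by (auto intro!: derivative_eq_intros) (simp add: field_simps power2_eq_square)
  ultimately have "((?h \<circ> (\<lambda>t. of_real (tanh (t/2)))) has_vector_derivative
      of_real ((1 - s^2) / 2) * (cis \<beta> * (-4 / ?D^2))) (at t)"
    unfolding s_def by (rule field_vector_diff_chain_at)
  moreover have "?h \<circ> (\<lambda>t. of_real (tanh (t/2))) = gammaH \<beta> a"
    by (simp add: gammaH_def fun_eq_iff)
  moreover have "of_real ((1 - s^2) / 2) * (cis \<beta> * (-4 / ?D^2)) = cis \<beta> * geod_velocity a s"
    unfolding geod_velocity_def D[symmetric] using \<open>?D \<noteq> 0\<close> by (simp add: field_simps)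
  ultimately show ?thesis by (simp add: s_def)
qed

lemma geod_velocity_nonzero:
  assumes "\<bar>s\<bar> < 1" shows "geod_velocity a s \<noteq> 0"
proof -
  have "-2 * (1 - s^2) \<noteq> 0" "Complex (-2) (a * (1 + s)) \<noteq> 0"
    using assms by (auto simp: abs_square_eq_1 complex_eq_iff)
  then show ?thesis unfolding geod_velocity_def by (simp del: of_real_mult of_real_diff)
qed

lemma geod_point_mult_cnj_velocity:
  fixes a s :: real
  assumes "\<bar>s\<bar> < 1"
  defines "X \<equiv> a * (1 + s)"
  shows "geod_point a s * cnj (geod_velocity a s)
    = cmod (geod_velocity a s) * (Complex (2 * s) X / Complex 2 X)"
proof -
  have "0 < 1 - s^2" using assms by (simp add: abs_square_less_1)
  then have "cmod (geod_velocity a s) = 2 * (1 - s^2) / (4 + X^2)"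
    unfolding geod_velocity_def X_def[symmetric] norm_divide norm_power norm_of_real
    by (simp add: cmod_def)
  then show ?thesis
    by (simp add: geod_point_def geod_velocity_def X_def[symmetric] complex_eq_iff Re_divide
        Im_divide power2_eq_square field_simps)
qed

lemma Complex_div_Complex_2_inj:
  assumes "s < 1" "Complex (2 * s) X / Complex 2 X = Complex (2 * s') X' / Complex 2 X'"
  shows "s = s'" "X = X'"
proof -
  have "Complex 2 X \<noteq> 0" "Complex 2 X' \<noteq> 0" by (auto simp: complex_eq_iff)
  with assms(2) have eq: "Complex (2 * s) X * Complex 2 X' = Complex (2 * s') X' * Complex 2 X"
    by (simp add: divide_simps del: complex_eq_iff)
  then show "s = s'"
    by (simp add: complex_eq_iff algebra_simps)
  with eq have "(X - X') * (1 - s) = 0"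
    by (simp add: complex_eq_iff algebra_simps)
  with assms(1) show "X = X'" by simp
qed

text \<open>The rotation \<open>cis \<beta>\<close> cancels in the product of the point with the conjugate velocity, which
  therefore determines \<open>s\<close> and \<open>a\<close>; the velocity then determines \<open>cis \<beta>\<close>.\<close>

lemma geod_data_unique:
  assumes s: "\<bar>s\<bar> < 1" and s': "\<bar>s'\<bar> < 1"
    and point: "cis \<beta>' * geod_point a' s' = cis \<beta> * geod_point a s"
    and velocity: "cis \<beta>' * geod_velocity a' s' = cis \<beta> * geod_velocity a s"
  shows "a' = a" "cis \<beta>' = cis \<beta>"
proof -
  let ?v = "geod_velocity a s" and ?v' = "geod_velocity a' s'"
  have "geod_point a' s' * cnj ?v' = geod_point a s * cnj ?v"
    using cis_mult_cnj_cis_mult[of \<beta>' "geod_point a' s'" ?v']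
      cis_mult_cnj_cis_mult[of \<beta> "geod_point a s" ?v]
    unfolding point velocity by simp
  moreover have "cmod ?v' = cmod ?v"
    using arg_cong[where f=cmod, OF velocity] by (simp add: norm_mult)
  ultimately have "of_real (cmod ?v) * (Complex (2 * s) (a * (1 + s)) / Complex 2 (a * (1 + s))) =
      of_real (cmod ?v) * (Complex (2 * s') (a' * (1 + s')) / Complex 2 (a' * (1 + s')))"
    using geod_point_mult_cnj_velocity[OF s, of a] geod_point_mult_cnj_velocity[OF s', of a']
    by simp
  moreover have "cmod ?v \<noteq> 0" using geod_velocity_nonzero[OF s] by simp
  ultimately have "Complex (2 * s) (a * (1 + s)) / Complex 2 (a * (1 + s)) =
      Complex (2 * s') (a' * (1 + s')) / Complex 2 (a' * (1 + s'))"
    by (simp only: mult_cancel_left of_real_eq_0_iff) simp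
  moreover have "s < 1" using s by simp
  ultimately have "s = s'" "a * (1 + s) = a' * (1 + s')"
    by (rule Complex_div_Complex_2_inj[rotated])+
  with s show "a' = a" by auto
  with velocity \<open>s = s'\<close> geod_velocity_nonzero[OF s] show "cis \<beta>' = cis \<beta>" by simp
qed

lemma piH_eqI:
  assumes \<beta>: "\<beta> \<in> {0..<2*pi}" and s: "\<bar>s\<bar> < 1"
    and z: "cis \<beta> * geod_point a s = z" and w: "cis \<beta> * geod_velocity a s = w"
  shows "piH z w = (\<beta>, a)"
  unfolding piH_def
proof (rule the_equality, goal_cases)
  case 1
  show ?case
    using gammaH_eq_geod_point[of \<beta> a "2 * artanh s"]
      gammaH_has_vector_derivative[of \<beta> a "2 * artanh s"] \<beta> z w s
    by (auto simp: tanh_artanh_real)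
next
  case (2 p)
  then obtain \<beta>' a' t where p: "p = (\<beta>', a')" and \<beta>': "\<beta>' \<in> {0..<2*pi}"
    and z': "gammaH \<beta>' a' t = z" and w': "(gammaH \<beta>' a' has_vector_derivative w) (at t)"
    by auto
  have "\<bar>tanh (t/2)\<bar> < 1" using tanh_real_bounds[of "t/2"] by auto
  moreover have "cis \<beta>' * geod_velocity a' (tanh (t/2)) = cis \<beta> * geod_velocity a s"
    using vector_derivative_unique_at[OF gammaH_has_vector_derivative w'] w by simp
  moreover have "cis \<beta>' * geod_point a' (tanh (t/2)) = cis \<beta> * geod_point a s"
    using z z' by (simp add: gammaH_eq_geod_point)
  ultimately have "a' = a" "cis \<beta>' = cis \<beta>"
    using geod_data_unique[OF s] by blast+
  then show ?case using p Arg2pi_cis[OF \<beta>] Arg2pi_cis[OF \<beta>'] by metis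
qed

section \<open>Entry data of Euclidean lines\<close>

text \<open>\<open>Im (y * cis (- \<theta>))\<close> is the signed distance from the origin to the line through \<open>y\<close> with
  direction \<open>cis \<theta>\<close>, i.e. the sine of its entry angle.\<close>

definition entry_angle :: "complex \<Rightarrow> real \<Rightarrow> real" where
  "entry_angle y \<theta> = arcsin (Im (y * cis (- \<theta>)))"

lemma abs_Im_mult_cis_less_1: "cmod y < 1 \<Longrightarrow> \<bar>Im (y * cis \<phi>)\<bar> < 1"
  using abs_Im_le_cmod[of "y * cis \<phi>"] by (simp add: norm_mult)

lemma entry_angle_bounds: "cmod y < 1 \<Longrightarrow> entry_angle y \<theta> \<in> {-pi/2<..<pi/2}"
  unfolding entry_angle_def using abs_Im_mult_cis_less_1[of y "-\<theta>"] arcsin_lt_bounded by auto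

lemma continuous_entry_angle:
  assumes "cmod y < 1" shows "continuous_on UNIV (entry_angle y)"
proof -
  have "-1 \<le> Im (y * cis (- \<theta>)) \<and> Im (y * cis (- \<theta>)) \<le> 1" for \<theta>
    using abs_Im_mult_cis_less_1[OF assms, of "- \<theta>"] unfolding abs_less_iff by linarith
  then show ?thesis unfolding entry_angle_def
    by (intro continuous_intros) blast+
qed

lemma entry_point_on_line:
  fixes \<theta> :: real
  assumes y: "cmod y < 1"
  defines "\<alpha> \<equiv> entry_angle y \<theta>"
  shows "\<exists>s\<ge>0. y = cis (\<theta> - pi - \<alpha>) + of_real s * cis \<theta>"
proof -
  define q where "q = y * cis (- \<theta>)"
  have "\<bar>Im q\<bar> < 1" unfolding q_def by (rule abs_Im_mult_cis_less_1[OF y])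
  then have sin: "sin \<alpha> = Im q" and cos: "cos \<alpha> = sqrt (1 - (Im q)^2)"
    by (simp_all add: \<alpha>_def entry_angle_def q_def sin_arcsin cos_arcsin)
  have "cmod q < 1" using y by (simp add: q_def norm_mult)
  then have "(Re q)^2 + (Im q)^2 < 1"
    by (simp add: abs_square_less_1 flip: cmod_power2)
  then have "\<bar>Re q\<bar> \<le> cos \<alpha>" unfolding cos by (intro real_le_rsqrt) simp
  moreover have "y = cis (\<theta> - pi - \<alpha>) + of_real (Re q + cos \<alpha>) * cis \<theta>"
  proof -
    have "y = q * cis \<theta>" by (simp add: q_def mult.assoc cis_mult)
    also have "q = of_real (Re q + cos \<alpha>) - cis (- \<alpha>)" using sin by (simp add: complex_eq_iff)
    finally have "y = of_real (Re q + cos \<alpha>) * cis \<theta> - cis (- \<alpha>) * cis \<theta>"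
      by (simp only: left_diff_distrib)
    moreover have "cis (- \<alpha>) * cis \<theta> = - cis (\<theta> - pi - \<alpha>)"
      by (simp add: complex_eq_iff cos_diff sin_diff cis_mult[symmetric])
    ultimately show ?thesis by simp
  qed
  ultimately show ?thesis by (intro exI[of _ "Re q + cos \<alpha>"]) auto
qed

lemma entryE_eq:
  fixes \<theta> :: real
  assumes y: "cmod y < 1"
  defines "\<alpha> \<equiv> entry_angle y \<theta>"
  shows "entryE y \<theta> = (Arg2pi (cis (\<theta> - pi - \<alpha>)), \<alpha>)"
  unfolding entryE_def
proof (rule the_equality, goal_cases)
  case 1
  have "cis (Arg2pi (cis (\<theta> - pi - \<alpha>)) + pi + \<alpha>) = cis (\<theta> - pi - \<alpha> + (pi + \<alpha>))"
    unfolding add.assoc cis_mult[symmetric] cis_Arg2pi_cis ..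
  then show ?case
    using Arg2pi entry_angle_bounds[OF y, of \<theta>, folded \<alpha>_def]
      entry_point_on_line[OF y, of \<theta>, folded \<alpha>_def]
    unfolding prod.case cis_Arg2pi_cis by auto
next
  case (2 p)
  then obtain \<beta>' \<alpha>' s where p: "p = (\<beta>', \<alpha>')" and \<beta>': "\<beta>' \<in> {0..<2*pi}"
    and \<alpha>': "\<alpha>' \<in> {-pi/2<..<pi/2}" and dir: "cis (\<beta>' + pi + \<alpha>') = cis \<theta>"
    and y': "y = cis \<beta>' + of_real s * cis \<theta>"
    by auto
  have "cis (\<theta> - pi - \<alpha>') = cis \<theta> * cis (- (pi + \<alpha>'))"
    unfolding cis_mult by (simp add: algebra_simps)
  also have "\<dots> = cis \<beta>'"
    unfolding dir[symmetric] cis_mult by simp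
  finally have \<beta>'_eq: "cis \<beta>' = cis (\<theta> - pi - \<alpha>')" ..
  have "y * cis (- \<theta>) = cis (- pi - \<alpha>') + of_real s"
    by (simp add: y' \<beta>'_eq algebra_simps cis_mult)
  then have "sin \<alpha>' = Im (y * cis (- \<theta>))" by (simp add: sin_diff)
  then have "\<alpha>' = \<alpha>"
    using \<alpha>' arcsin_sin[of \<alpha>'] unfolding \<alpha>_def entry_angle_def by auto
  moreover have "\<beta>' = Arg2pi (cis (\<theta> - pi - \<alpha>'))"
    using Arg2pi_cis[OF \<beta>'] \<beta>'_eq by simp
  ultimately show ?case using p by simp
qed

lemma entryE_add_2pi: "entryE y (\<theta> + 2 * pi) = entryE y \<theta>"
proof -
  have "cis (\<theta> + 2 * pi) = cis \<theta>" by (simp add: complex_eq_iff)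
  then show ?thesis unfolding entryE_def by simp
qed

section \<open>The stretched angle\<close>

text \<open>A continuous branch of the argument of \<open>cos u + \<i> k sin u\<close>: the arctangent term is the
  angle from \<open>cis u\<close> to that point.\<close>

definition stretch_angle :: "real \<Rightarrow> real \<Rightarrow> real" where
  "stretch_angle k u = u + arctan ((k - 1) * sin u * cos u / ((cos u)^2 + k * (sin u)^2))"

definition stretch_norm2 :: "real \<Rightarrow> real \<Rightarrow> real" where
  "stretch_norm2 k u = (cos u)^2 + k^2 * (sin u)^2"

lemma cos_sq_plus_mult_sin_sq_pos:
  fixes k u :: real
  assumes "0 < k" shows "0 < (cos u)^2 + k * (sin u)^2"
proof (cases "cos u = 0")
  case True
  then have "(sin u)^2 = 1" using sin_cos_squared_add[of u] by simp
  with True assms show ?thesis by simp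
qed (use assms in \<open>simp add: add_pos_nonneg\<close>)

lemma stretch_norm2_pos: "0 < k \<Longrightarrow> 0 < stretch_norm2 k u"
  unfolding stretch_norm2_def by (rule cos_sq_plus_mult_sin_sq_pos) simp

lemma cis_arctan: "cis (arctan x) = Complex 1 x / sqrt (1 + x^2)"
  by (simp add: complex_eq_iff cos_arctan sin_arctan)

lemma cis_stretch_angle:
  assumes "0 < k"
  shows "cis (stretch_angle k u) = Complex (cos u) (k * sin u) / sqrt (stretch_norm2 k u)"
proof -
  define D where "D = (cos u)^2 + k * (sin u)^2"
  define E where "E = (k - 1) * sin u * cos u"
  have "0 < D" unfolding D_def by (rule cos_sq_plus_mult_sin_sq_pos[OF assms])
  have pyth: "(cos u)^2 + (sin u)^2 = 1" by simp
  have N: "D^2 + E^2 = stretch_norm2 k u"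
    unfolding D_def E_def stretch_norm2_def using pyth by algebra
  have "cis (arctan (E / D)) = Complex D E / sqrt (D^2 + E^2)"
    using \<open>0 < D\<close> by (simp add: cis_arctan complex_eq_iff field_simps real_sqrt_divide)
  moreover have "cos u * D - sin u * E = cos u" "sin u * D + cos u * E = k * sin u"
    unfolding D_def E_def using pyth by algebra+
  then have "cis u * Complex D E = Complex (cos u) (k * sin u)"
    by (simp add: complex_eq_iff)
  ultimately show ?thesis
    by (simp add: stretch_angle_def D_def[symmetric] E_def[symmetric] N cis_mult[symmetric])
qed

lemma stretch_angle_has_real_derivative:
  assumes "0 < k"
  shows "(stretch_angle k has_real_derivative k / stretch_norm2 k u) (at u)"
proof -
  define D where "D = (cos u)^2 + k * (sin u)^2"
  define E where "E = (k - 1) * sin u * cos u"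
  define D' where "D' = 2 * (k - 1) * sin u * cos u"
  define E' where "E' = (k - 1) * ((cos u)^2 - (sin u)^2)"
  have "0 < D" unfolding D_def by (rule cos_sq_plus_mult_sin_sq_pos[OF assms])
  have pyth: "(cos u)^2 + (sin u)^2 = 1" by simp
  have N: "D^2 + E^2 = stretch_norm2 k u"
    unfolding D_def E_def stretch_norm2_def using pyth by algebra
  have "(stretch_angle k has_real_derivative 1 + (E' * D - E * D') / (D^2 + E^2)) (at u)"
    unfolding stretch_angle_def using \<open>0 < D\<close>
  proof (auto intro!: derivative_eq_intros, fold D_def E_def)
    have E': "cos u * (k - 1) * cos u - sin u * ((k - 1) * sin u) = E'"
      and D': "2 * (cos u * sin u) * k - 2 * (sin u * cos u) = D'"
      by (simp_all add: E'_def D'_def algebra_simps power2_eq_square)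
    have "inverse (1 + (E / D)^2) = D^2 / (D^2 + E^2)"
      using \<open>0 < D\<close> by (simp add: field_simps)
    then show "inverse (1 + (E / D)\<^sup>2) *
        ((cos u * (k - 1) * cos u - sin u * ((k - 1) * sin u)) * D -
         E * (2 * (cos u * sin u) * k - 2 * (sin u * cos u))) / (D * D) =
        (E' * D - E * D') / (D\<^sup>2 + E\<^sup>2)"
      unfolding E' D' using \<open>0 < D\<close> by (simp add: power2_eq_square)
  qed simp
  moreover have "D^2 + E^2 + (E' * D - E * D') = k"
    unfolding D_def E_def D'_def E'_def using pyth by algebra
  ultimately show ?thesis
    using N stretch_norm2_pos[OF assms, of u] by (simp add: field_simps)
qed

lemma stretch_angle_add_2pi: "stretch_angle k (u + 2 * pi) = stretch_angle k u + 2 * pi"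
  by (simp add: stretch_angle_def)

section \<open>Geodesics and lines in polar coordinates\<close>

lemma mult_cos_less_1: "0 \<le> r \<Longrightarrow> r < 1 \<Longrightarrow> r * cos u < (1::real)"
  using mult_left_le[of "cos u" r] cos_le_one[of u] by linarith

lemma one_minus_mult_cis_nonzero:
  assumes "\<bar>r\<bar> < 1" shows "1 - of_real r * cis u \<noteq> 0"
proof
  assume "1 - of_real r * cis u = 0"
  then have "cmod (of_real r * cis u) = 1" by simp
  with assms show False by (simp add: norm_mult)
qed

lemma cmod_one_minus_mult_cis_sq: "(cmod (1 - of_real r * cis u))^2 = 1 - 2 * r * cos u + r^2"
proof -
  have "r * (r * (cos u * cos u)) + r * (r * (sin u * sin u)) = r * r"
    by (metis distrib_left mult_1_right sin_cos_squared_add3)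
  then show ?thesis unfolding cmod_power2 by (simp add: power2_eq_square algebra_simps)
qed

lemma of_real_minus_cis_eq: "of_real r - cis u = - cis u * cnj (1 - of_real r * cis u)"
proof -
  have "cis u * cnj (cis u) = 1" by (simp add: cis_cnj cis_mult)
  then show ?thesis by (simp add: algebra_simps)
qed

lemma cmod_moebius_cis:
  assumes "\<bar>r\<bar> < 1" shows "cmod ((of_real r - cis u) / (1 - of_real r * cis u)) = 1"
proof -
  have "cmod (of_real r - cis u) = cmod (1 - of_real r * cis u)"
    by (simp only: of_real_minus_cis_eq norm_mult norm_minus_cancel norm_cis complex_mod_cnj
        mult_1_left)
  moreover have "cmod (1 - of_real r * cis u) \<noteq> 0"
    using one_minus_mult_cis_nonzero[OF assms, of u] by simp
  ultimately show ?thesis by (simp add: norm_divide)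
qed

text \<open>The geodesic through \<open>r\<close> with direction \<open>cis u\<close> has parameter
  \<open>a = - 2 r sin u / (1 - r\<^sup>2)\<close> and passes \<open>r\<close> at \<open>tanh (t/2) = s = (r cos u - r\<^sup>2) / (1 - r cos u)\<close>.\<close>

lemma geod_polar_components:
  fixes r u :: real and \<zeta> :: complex
  assumes r: "0 \<le> r" "r < 1"
  defines "\<zeta> \<equiv> cis u" and "e \<equiv> 1 - r * cos u"
  defines "a \<equiv> - 2 * r * sin u / (1 - r^2)" and "s \<equiv> (r * cos u - r^2) / e"
  shows "Complex (2 * s) (a * (1 + s)) = 2 * r * (cnj \<zeta> - r) / e"
    and "Complex (-2) (a * (1 + s)) = - 2 * (1 - r * cnj \<zeta>) / e"
    and "1 - s^2 = (1 - r^2) * (1 - 2 * r * cos u + r^2) / e^2"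
proof -
  have "0 < e" unfolding e_def using mult_cos_less_1[OF r, of u] by simp
  have "0 < 1 - r^2" using r by (simp add: abs_square_less_1)
  have "1 + s = (1 - r^2) / e"
    using \<open>0 < e\<close> by (simp add: s_def e_def field_simps power2_eq_square)
  then have X: "a * (1 + s) = - 2 * r * sin u / e"
    using \<open>0 < 1 - r^2\<close> by (simp add: a_def)
  show "Complex (2 * s) (a * (1 + s)) = 2 * r * (cnj \<zeta> - r) / e"
    unfolding X using \<open>0 < e\<close>
    by (simp add: complex_eq_iff \<zeta>_def s_def field_simps) (simp add: power2_eq_square)
  show "Complex (-2) (a * (1 + s)) = - 2 * (1 - r * cnj \<zeta>) / e"
    unfolding X using \<open>0 < e\<close> by (simp add: complex_eq_iff \<zeta>_def e_def field_simps)
  have "1 - s^2 = (e^2 - (r * cos u - r^2)^2) / e^2"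
    using \<open>0 < e\<close> unfolding s_def power_divide by (simp add: diff_divide_distrib)
  also have "e^2 - (r * cos u - r^2)^2 = (1 - r^2) * (1 - 2 * r * cos u + r^2)"
    by (simp add: e_def power2_eq_square algebra_simps)
  finally show "1 - s^2 = (1 - r^2) * (1 - 2 * r * cos u + r^2) / e^2" .
qed

lemma
  fixes r u :: real
  assumes r: "0 \<le> r" "r < 1"
  defines "a \<equiv> - 2 * r * sin u / (1 - r^2)" and "s \<equiv> (r * cos u - r^2) / (1 - r * cos u)"
  shows geod_point_polar: "geod_point a s = r * cnj ((r - cis u) / (1 - r * cis u))"
    and geod_velocity_polar:
      "geod_velocity a s = - ((1 - r^2) / 2) * ((1 - r * cis u) / cnj (1 - r * cis u))"
proof -
  define e where "e = 1 - r * cos u"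
  have "e \<noteq> 0" using mult_cos_less_1[OF r, of u] by (simp add: e_def)
  note components = geod_polar_components[OF r, of u, folded a_def s_def e_def]
  have "1 - r * cis u \<noteq> 0" and D: "1 - r * cnj (cis u) \<noteq> 0"
    using one_minus_mult_cis_nonzero[of r u] one_minus_mult_cis_nonzero[of r "-u"] r
    by (simp_all add: cis_cnj)
  with \<open>e \<noteq> 0\<close> show "geod_point a s = r * cnj ((r - cis u) / (1 - r * cis u))"
    unfolding geod_point_def components by (simp add: field_simps)
  have "complex_of_real (1 - 2 * r * cos u + r^2) = (1 - r * cis u) * (1 - r * cnj (cis u))"
    using complex_norm_square[of "1 - r * cis u"] by (simp add: cmod_one_minus_mult_cis_sq)
  moreover have "geod_velocity a s
      = - ((1 - r^2) / 2) * complex_of_real (1 - 2 * r * cos u + r^2) / (1 - r * cnj (cis u))^2"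
    unfolding geod_velocity_def components using \<open>e \<noteq> 0\<close> D
    by (simp add: field_simps del: of_real_add of_real_diff of_real_mult of_real_power)
      (simp add: algebra_simps power2_eq_square power4_eq_xxxx)
  ultimately show "geod_velocity a s = - ((1 - r^2) / 2) * ((1 - r * cis u) / cnj (1 - r * cis u))"
    using D by (simp add: power2_eq_square)
qed

lemma abs_geod_polar_param_less_1:
  fixes r u :: real
  assumes "0 \<le> r" "r < 1"
  shows "\<bar>(r * cos u - r^2) / (1 - r * cos u)\<bar> < 1"
proof -
  have e: "0 < 1 - r * cos u" using mult_cos_less_1[OF assms, of u] by simp
  have "0 < (cmod (1 - r * cis u))^2"
    using one_minus_mult_cis_nonzero[of r u] assms by simp
  then have "r * cos u - r^2 < 1 - r * cos u" by (simp add: cmod_one_minus_mult_cis_sq)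
  moreover have "- (1 - r * cos u) < r * cos u - r^2"
    using assms by (simp add: abs_square_less_1)
  ultimately show ?thesis using e by (simp add: abs_less_iff divide_less_eq less_divide_eq)
qed

lemma piH_polar:
  fixes r \<psi> u :: real
  assumes r: "0 \<le> r" "r < 1"
  defines "w \<equiv> (r - cis u) / (1 - r * cis u)"
  shows "piH (of_real r * cis \<psi>) (of_real ((1 - r^2) / 2) * cis (\<psi> + u))
    = (Arg2pi (cis \<psi> * w), - 2 * r * sin u / (1 - r^2))"
proof (rule piH_eqI)
  have "cmod w = 1" unfolding w_def using cmod_moebius_cis[of r u] r by simp
  then have "cmod (cis \<psi> * w) = 1" by (simp add: norm_mult)
  then have cis_Arg: "cis (Arg2pi (cis \<psi> * w)) = cis \<psi> * w"
    by (simp add: cis_conv_exp complex_norm_eq_1_exp)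
  show "Arg2pi (cis \<psi> * w) \<in> {0..<2*pi}" using Arg2pi by simp
  show "\<bar>(r * cos u - r^2) / (1 - r * cos u)\<bar> < 1" by (rule abs_geod_polar_param_less_1[OF r])
  have "w * cnj w = 1"
    using complex_norm_square[of w] \<open>cmod w = 1\<close> by simp
  have "cis (Arg2pi (cis \<psi> * w)) * geod_point (- 2 * r * sin u / (1 - r^2))
      ((r * cos u - r^2) / (1 - r * cos u)) = r * cis \<psi> * (w * cnj w)"
    unfolding cis_Arg geod_point_polar[OF r] w_def[symmetric] by (simp only: mult_ac)
  then show "cis (Arg2pi (cis \<psi> * w)) * geod_point (- 2 * r * sin u / (1 - r^2))
      ((r * cos u - r^2) / (1 - r * cos u)) = r * cis \<psi>"
    using \<open>w * cnj w = 1\<close> by simp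
  define D where "D = 1 - of_real r * cis u"
  have "D \<noteq> 0" using one_minus_mult_cis_nonzero[of r u] r by (simp add: D_def)
  then have "cnj D \<noteq> 0" by simp
  have "w = - cis u * cnj D / D"
    unfolding w_def D_def of_real_minus_cis_eq ..
  with \<open>D \<noteq> 0\<close> \<open>cnj D \<noteq> 0\<close> have "w * (D / cnj D) = - cis u" by simp
  have "cis (Arg2pi (cis \<psi> * w)) * geod_velocity (- 2 * r * sin u / (1 - r^2))
      ((r * cos u - r^2) / (1 - r * cos u)) = - ((1 - r^2) / 2) * cis \<psi> * (w * (D / cnj D))"
    unfolding cis_Arg geod_velocity_polar[OF r] D_def[symmetric] by (simp only: mult_ac)
  also have "\<dots> = (1 - r^2) / 2 * (cis \<psi> * cis u)"
    unfolding \<open>w * (D / cnj D) = - cis u\<close> by simp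
  finally show "cis (Arg2pi (cis \<psi> * w)) * geod_velocity (- 2 * r * sin u / (1 - r^2))
      ((r * cos u - r^2) / (1 - r * cos u)) = (1 - r^2) / 2 * cis (\<psi> + u)"
    by (simp add: cis_mult)
qed

lemma cmod_polar_image_less_1:
  assumes "0 \<le> r" "r < 1"
  shows "cmod (complex_of_real (2 * r / (1 + r^2)) * cis \<psi>) < 1"
proof -
  have "0 < (1 - r)^2" using assms by simp
  then have "2 * r < 1 + r^2" by (simp add: power2_diff)
  then show ?thesis unfolding norm_mult norm_cis norm_of_real using assms by simp
qed

lemma one_plus_sq_geod_param:
  fixes r u :: real
  assumes "0 \<le> r" "r < 1"
  shows "1 + (- 2 * r * sin u / (1 - r^2))^2 = stretch_norm2 ((1 + r^2) / (1 - r^2)) u"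
proof -
  have "0 < 1 - r^2" using assms by (simp add: abs_square_less_1)
  then show ?thesis
    unfolding stretch_norm2_def by (simp add: field_simps cos_squared_eq) algebra
qed

lemma entry_angle_polar:
  fixes r \<psi> u :: real
  assumes r: "0 \<le> r" "r < 1"
  defines "k \<equiv> (1 + r^2) / (1 - r^2)" and "a \<equiv> - 2 * r * sin u / (1 - r^2)"
  shows "entry_angle (complex_of_real (2 * r / (1 + r^2)) * cis \<psi>) (\<psi> + stretch_angle k u)
    = arctan a"
proof -
  define m where "m = 1 - r^2"
  have "0 < m" using r by (simp add: m_def abs_square_less_1)
  have "0 < 1 + r^2" by (simp add: add_pos_nonneg)
  then have "0 < k" using \<open>0 < m\<close> by (simp add: k_def m_def[symmetric])
  have "1 + a^2 = stretch_norm2 k u"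
    unfolding a_def k_def by (rule one_plus_sq_geod_param[OF r])
  then have "sin (arctan a) = - 2 * r * sin u / (m * sqrt (stretch_norm2 k u))"
    using \<open>0 < m\<close> by (simp add: sin_arctan a_def m_def)
  also have "\<dots> = - (2 * r / (1 + r^2)) * sin (stretch_angle k u)"
    using arg_cong[where f=Im, OF cis_stretch_angle[OF \<open>0 < k\<close>, of u]] \<open>0 < m\<close> \<open>0 < 1 + r^2\<close>
    by (simp add: k_def m_def)
  also have "\<dots> = Im (complex_of_real (2 * r / (1 + r^2)) * cis \<psi> * cis (- (\<psi> + stretch_angle k u)))"
  proof -
    have eq: "complex_of_real (2 * r / (1 + r^2)) * cis \<psi> * cis (- (\<psi> + stretch_angle k u))
        = of_real (2 * r / (1 + r^2)) * cnj (cis (stretch_angle k u))"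
      by (simp add: cis_cnj cis_mult)
    show ?thesis unfolding eq by simp
  qed
  finally have sin_eq: "sin (arctan a)
      = Im (complex_of_real (2 * r / (1 + r^2)) * cis \<psi> * cis (- (\<psi> + stretch_angle k u)))" .
  show ?thesis
    unfolding entry_angle_def sin_eq[symmetric] using arctan_bounded[of a] by (intro arcsin_sin) auto
qed

lemma entry_direction_identity:
  fixes r C S :: real
  assumes "C^2 + S^2 = 1"
  defines "m \<equiv> 1 - r^2"
  shows "- (Complex (m * C) ((1 + r^2) * S) * Complex m (2 * r * S) * Complex (1 - r * C) (- r * S))
    = of_real (m^2 + (2 * r * S)^2) * Complex (r - C) (- S)"
  unfolding complex_eq_iff m_def using assms(1)
  by (intro conjI) (simp, algebra)+

lemma entry_point_polar:
  fixes r \<psi> u :: real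
  assumes r: "0 \<le> r" "r < 1"
  defines "k \<equiv> (1 + r^2) / (1 - r^2)" and "a \<equiv> - 2 * r * sin u / (1 - r^2)"
  shows "cis (\<psi> + stretch_angle k u - pi - arctan a) = cis \<psi> * ((r - cis u) / (1 - r * cis u))"
proof -
  define m where "m = 1 - r^2"
  define P where "P = Complex (m * cos u) ((1 + r^2) * sin u)"
  define Q where "Q = Complex m (2 * r * sin u)"
  define M where "M = m^2 + (2 * r * sin u)^2"
  have "0 < m" using r by (simp add: m_def abs_square_less_1)
  then have "0 < k" by (simp add: k_def m_def[symmetric] add_pos_nonneg)
  have N: "1 + a^2 = stretch_norm2 k u"
    unfolding a_def k_def by (rule one_plus_sq_geod_param[OF r])
  have "0 < M" unfolding M_def using \<open>0 < m\<close> by (simp add: add_pos_nonneg)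
  then have M: "of_real M \<noteq> (0::complex)" by (simp only: of_real_eq_0_iff)
  have k: "k = (1 + r^2) / m" and a: "a = - 2 * r * sin u / m" by (simp_all add: k_def a_def m_def)
  have "(m * sqrt (stretch_norm2 k u))^2 = M"
    using stretch_norm2_pos[OF \<open>0 < k\<close>, of u] \<open>0 < m\<close>
    unfolding M_def N[symmetric] a by (simp add: power_mult_distrib field_simps)
  moreover have "cis (stretch_angle k u) = P / of_real (m * sqrt (stretch_norm2 k u))"
    using cis_stretch_angle[OF \<open>0 < k\<close>, of u] \<open>0 < m\<close> by (simp add: P_def k complex_eq_iff)
  moreover have "cis (- arctan a) = Q / of_real (m * sqrt (stretch_norm2 k u))"
    using cis_arctan[of a] \<open>0 < m\<close> by (simp add: Q_def N[symmetric] a complex_eq_iff)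
  ultimately have prod: "cis (stretch_angle k u) * cis (- arctan a) = P * Q / of_real M"
    by (simp add: power2_eq_square flip: of_real_mult)
  have "- (P * Q) * (1 - r * cis u) = (r - cis u) * of_real M"
    using entry_direction_identity[of "cos u" "sin u" r]
    by (simp add: P_def Q_def M_def m_def complex_eq_iff)
  then have w: "- (P * Q) / of_real M = (r - cis u) / (1 - r * cis u)"
    using one_minus_mult_cis_nonzero[of r u] r by (subst frac_eq_eq[OF M]) simp_all
  have "cis (\<psi> + stretch_angle k u - pi - arctan a)
      = cis \<psi> * cis (- pi) * (cis (stretch_angle k u) * cis (- arctan a))"
    unfolding cis_mult by (rule arg_cong[where f=cis]) simp
  also have "\<dots> = cis \<psi> * (- (P * Q) / of_real M)"
  proof -
    have "cis (- pi) = -1" by (simp add: complex_eq_iff)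
    then show ?thesis unfolding prod by simp
  qed
  finally show ?thesis unfolding w .
qed

lemma entryE_polar:
  fixes r \<psi> u :: real
  assumes r: "0 \<le> r" "r < 1"
  defines "k \<equiv> (1 + r^2) / (1 - r^2)" and "a \<equiv> - 2 * r * sin u / (1 - r^2)"
  shows "entryE (complex_of_real (2 * r / (1 + r^2)) * cis \<psi>) (\<psi> + stretch_angle k u)
    = (Arg2pi (cis \<psi> * ((r - cis u) / (1 - r * cis u))), arctan a)"
  using entryE_eq[OF cmod_polar_image_less_1[OF r]] entry_angle_polar[OF r] entry_point_polar[OF r]
  by (simp add: k_def a_def)

section \<open>Integration over a period\<close>

lemma integral_periodic_shift:
  fixes f :: "real \<Rightarrow> 'a::euclidean_space"
  assumes cont: "continuous_on UNIV f" and per: "\<And>x. f (x + T) = f x" and "0 < T"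
  shows "integral {a..a + T} f = integral {0..T} f"
proof -
  interpret periodic_fun_simple f T by unfold_locales (rule per)
  define n where "n = \<lfloor>a / T\<rfloor>"
  define b where "b = a - of_int n * T"
  have "of_int n \<le> a / T" "a / T < of_int n + 1" unfolding n_def by linarith+
  then have b: "0 \<le> b" "b \<le> T"
    using \<open>0 < T\<close> by (simp_all add: b_def field_simps)
  have int: "f integrable_on {c..d}" for c d
    using cont by (blast intro: integrable_continuous_interval continuous_on_subset)
  have "integral {a..a + T} f = integral {b..b + T} f"
    using integral_shift_real_ivl[where f=f and a=a and b="a + T" and c="of_int n * T"]
    unfolding plus_of_int by (simp add: b_def algebra_simps)
  also have "\<dots> = integral {b..T} f + integral {T..b + T} f"
    using b int by (intro Henstock_Kurzweil_Integration.integral_combine[symmetric]) auto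
  also have "integral {T..b + T} f = integral {0..b} f"
    using integral_shift_real_ivl[where f=f and a=T and b="b + T" and c=T] by (simp add: per)
  also have "integral {b..T} f + integral {0..b} f = integral {0..T} f"
    using b int by (subst add.commute, intro Henstock_Kurzweil_Integration.integral_combine) auto
  finally show ?thesis .
qed

lemma has_integral_periodic_substitution:
  fixes f :: "real \<Rightarrow> 'a::euclidean_space" and \<phi> \<phi>' :: "real \<Rightarrow> real"
  assumes cont: "continuous_on UNIV f" and per: "\<And>x. f (x + T) = f x" and "0 < T"
    and deriv: "\<And>u. (\<phi> has_real_derivative \<phi>' u) (at u)"
    and shift: "\<And>u. \<phi> (u + T) = \<phi> u + T"
  shows "((\<lambda>u. \<phi>' u *\<^sub>R f (\<phi> u)) has_integral integral {0..T} f) {a..a + T}"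
proof -
  have "continuous_on {a..a + T} \<phi>"
    using deriv by (rule has_real_derivative_imp_continuous_on)
  then have "bounded (\<phi> ` {a..a + T})" by (simp add: compact_continuous_image compact_imp_bounded)
  then obtain B where "\<phi> ` {a..a + T} \<subseteq> {-B..B}"
    by (rule bounded_subset_cbox_symmetric) (simp add: cbox_interval)
  then have "((\<lambda>u. \<phi>' u *\<^sub>R f (\<phi> u)) has_integral integral {\<phi> a..\<phi> (a + T)} f) {a..a + T}"
    using \<open>0 < T\<close> shift[of a] cont
    by (intro has_integral_substitution[where c="-B" and d=B])
       (auto intro: continuous_on_subset has_field_derivative_at_within deriv)
  then show ?thesis
    unfolding shift integral_periodic_shift[OF cont per \<open>0 < T\<close>] .
qed

section \<open>The two backprojections in polar coordinates\<close>

lemma smooth2_continuous: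
  assumes "smooth2 g" shows "continuous_on UNIV g"
proof -
  from assms obtain g' where "\<forall>x. (g has_derivative g' x) (at x)"
    by (cases rule: smooth2.cases) auto
  then show ?thesis
    by (intro continuous_at_imp_continuous_on) (blast intro: has_derivative_continuous)
qed

lemma smooth_on_GH_Arg2pi_cis:
  assumes "smooth_on_GH g" shows "g (Arg2pi (cis x), t) = g (x, t)"
proof -
  interpret periodic_fun_simple "\<lambda>\<beta>. g (\<beta>, t)" "2 * pi"
    using assms by unfold_locales (simp add: smooth_on_GH_def)
  have "sin (Arg2pi (cis x)) = sin x \<and> cos (Arg2pi (cis x)) = cos x"
    using cis_Arg2pi_cis[of x] by (simp add: complex_eq_iff)
  then obtain n :: int where "Arg2pi (cis x) = x + 2 * pi * n"
    using sin_cos_eq_iff by blast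
  then show ?thesis using plus_of_int[of x n] by (simp add: mult.commute)
qed

lemma backprojE_integrand_eq:
  fixes \<theta> :: real
  assumes "smooth_on_GH g" "cmod y < 1"
  defines "\<alpha> \<equiv> entry_angle y \<theta>"
  shows "muE (entryE y \<theta>) powi -2 * gtilde g (entryE y \<theta>)
    = g (\<theta> - pi - \<alpha>, tan \<alpha>) / (cos \<alpha>)^2"
  using entryE_eq[OF assms(2), of \<theta>] smooth_on_GH_Arg2pi_cis[OF assms(1)]
  by (simp add: muE_def gtilde_def \<alpha>_def power_int_minus divide_inverse mult.commute)

lemma continuous_backprojE_integrand:
  assumes g: "smooth_on_GH g" and y: "cmod y < 1"
  shows "continuous_on UNIV (\<lambda>\<theta>. muE (entryE y \<theta>) powi -2 * gtilde g (entryE y \<theta>))"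
proof -
  have cos: "cos (entry_angle y \<theta>) \<noteq> 0" for \<theta>
    using entry_angle_bounds[OF y, of \<theta>] cos_gt_zero_pi[of "entry_angle y \<theta>"] by auto
  have "continuous_on UNIV g"
    using g by (simp add: smooth_on_GH_def smooth2_continuous)
  moreover have "continuous_on UNIV (\<lambda>\<theta>. (\<theta> - pi - entry_angle y \<theta>, tan (entry_angle y \<theta>)))"
    using continuous_entry_angle[OF y] cos by (intro continuous_intros) auto
  ultimately have "continuous_on UNIV (\<lambda>\<theta>. g (\<theta> - pi - entry_angle y \<theta>, tan (entry_angle y \<theta>)))"
    by (rule continuous_on_compose2) simp
  moreover have "continuous_on UNIV (\<lambda>\<theta>. (cos (entry_angle y \<theta>))^2)"
    using continuous_entry_angle[OF y] by (intro continuous_intros)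
  ultimately have "continuous_on UNIV
      (\<lambda>\<theta>. g (\<theta> - pi - entry_angle y \<theta>, tan (entry_angle y \<theta>)) / (cos (entry_angle y \<theta>))^2)"
    using cos by (intro continuous_on_divide) auto
  then show ?thesis by (simp add: backprojE_integrand_eq[OF g y])
qed

lemma backprojE_polar:
  fixes g :: "real \<times> real \<Rightarrow> real" and r \<psi> :: real
  assumes g: "smooth_on_GH g" and r: "0 \<le> r" "r < 1"
  defines "k \<equiv> (1 + r^2) / (1 - r^2)" and "y \<equiv> complex_of_real (2 * r / (1 + r^2)) * cis \<psi>"
  defines "H \<equiv> \<lambda>\<theta>. muE (entryE y \<theta>) powi -2 * gtilde g (entryE y \<theta>)"
  shows "backprojE (\<lambda>p. muE p powi -2 * gtilde g p) y
    = integral {-\<psi>..-\<psi> + 2 * pi} (\<lambda>u. k / stretch_norm2 k u * H (\<psi> + stretch_angle k u))"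
proof -
  have "0 < 1 - r^2" using r by (simp add: abs_square_less_1)
  then have "0 < k" by (simp add: k_def add_pos_nonneg)
  have "((\<lambda>u. (k / stretch_norm2 k u) *\<^sub>R H (\<psi> + stretch_angle k u)) has_integral
      integral {0..2 * pi} H) {-\<psi>..-\<psi> + 2 * pi}"
  proof (rule has_integral_periodic_substitution)
    show "continuous_on UNIV H"
      unfolding H_def y_def by (rule continuous_backprojE_integrand[OF g cmod_polar_image_less_1[OF r]])
    show "H (\<theta> + 2 * pi) = H \<theta>" for \<theta> by (simp add: H_def entryE_add_2pi)
    show "((\<lambda>u. \<psi> + stretch_angle k u) has_real_derivative k / stretch_norm2 k u) (at u)" for u
      using stretch_angle_has_real_derivative[OF \<open>0 < k\<close>, of u] by (auto intro!: derivative_eq_intros)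
    show "\<psi> + stretch_angle k (u + 2 * pi) = \<psi> + stretch_angle k u + 2 * pi" for u
      by (simp add: stretch_angle_add_2pi)
  qed simp
  then show ?thesis by (simp add: backprojE_def H_def integral_unique)
qed

lemma backprojH_polar:
  fixes g :: "real \<times> real \<Rightarrow> real" and r \<psi> :: real
  assumes "0 \<le> r"
  shows "backprojH g (of_real r * cis \<psi>) = integral {-\<psi>..-\<psi> + 2 * pi}
    (\<lambda>u. g (piH (of_real r * cis \<psi>) (of_real ((1 - r^2) / 2) * cis (\<psi> + u))))"
proof -
  have cH: "cH (of_real r * cis \<psi>) = (1 - r^2) / 2" using assms by (simp add: cH_def norm_mult)
  show ?thesis
    unfolding backprojH_def cH
    using integral_shift_real_ivl[where a=0 and b="2 * pi" and c=\<psi>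
        and f="\<lambda>\<phi>. g (piH (of_real r * cis \<psi>) (of_real ((1 - r^2) / 2) * cis \<phi>))"]
    by (simp add: add.commute)
qed

lemma backproj_integrands_polar:
  fixes g :: "real \<times> real \<Rightarrow> real" and r \<psi> u :: real
  assumes r: "0 \<le> r" "r < 1"
  defines "k \<equiv> (1 + r^2) / (1 - r^2)" and "y \<equiv> complex_of_real (2 * r / (1 + r^2)) * cis \<psi>"
  defines "p \<equiv> entryE y (\<psi> + stretch_angle k u)"
  shows "muE p powi -2 * gtilde g p
    = stretch_norm2 k u * g (piH (of_real r * cis \<psi>) (of_real ((1 - r^2) / 2) * cis (\<psi> + u)))"
proof -
  define a where "a = - 2 * r * sin u / (1 - r^2)"
  define w where "w = (r - cis u) / (1 - r * cis u)"
  have p: "p = (Arg2pi (cis \<psi> * w), arctan a)"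
    unfolding p_def using entryE_polar[OF r, of \<psi> u, folded k_def y_def a_def w_def] .
  have piH: "piH (of_real r * cis \<psi>) (of_real ((1 - r^2) / 2) * cis (\<psi> + u))
      = (Arg2pi (cis \<psi> * w), a)"
    using piH_polar[OF r, of \<psi> u, folded a_def w_def] .
  have "inverse ((cos (arctan a))^2) = 1 + a^2"
    by (simp add: cos_arctan power_divide add_pos_nonneg)
  then show ?thesis
    unfolding p piH one_plus_sq_geod_param[OF r, of u, folded k_def a_def, symmetric]
    by (simp add: muE_def gtilde_def power_int_minus tan_arctan)
qed

lemma PhiM_polar: "0 \<le> r \<Longrightarrow> PhiM (of_real r * cis \<psi>) = of_real (2 * r / (1 + r^2)) * cis \<psi>"
  by (simp add: PhiM_def norm_mult)

lemma sqrt_dfun_PhiM_polar: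
  assumes "0 \<le> r" "r < 1"
  shows "sqrt (dfun (PhiM (of_real r * cis \<psi>))) = (1 - r^2) / (1 + r^2)"
proof -
  have "0 < 1 + r^2" "0 \<le> 1 - r^2" using assms by (simp_all add: add_pos_nonneg abs_square_le_1)
  moreover have "1 - (2 * r / (1 + r^2))^2 = ((1 - r^2) / (1 + r^2))^2"
    using \<open>0 < 1 + r^2\<close> by (simp add: field_simps) algebra
  ultimately show ?thesis
    unfolding PhiM_polar[OF assms(1)] dfun_def norm_mult norm_of_real norm_cis using assms by simp
qed

theorem theorem3p14:
  fixes g :: "real \<times> real \<Rightarrow> real" and z :: complex
  assumes "smooth_on_GH g" and "cmod z < 1"
  shows "backprojH g z =
    sqrt (dfun (PhiM z)) * backprojE (\<lambda>p. (muE p) powi (-2) * gtilde g p) (PhiM z)"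
proof -
  define r \<psi> where "r = cmod z" and "\<psi> = Arg z"
  have r: "0 \<le> r" "r < 1" and z: "z = of_real r * cis \<psi>"
    using assms(2) rcis_cmod_Arg[of z] by (simp_all add: r_def \<psi>_def rcis_def)
  define k where "k = (1 + r^2) / (1 - r^2)"
  have "0 < 1 - r^2" using r by (simp add: abs_square_less_1)
  then have "0 < k" by (simp add: k_def add_pos_nonneg)
  have "backprojE (\<lambda>p. muE p powi -2 * gtilde g p) (PhiM z)
      = integral {-\<psi>..-\<psi> + 2 * pi}
          (\<lambda>u. k * g (piH (of_real r * cis \<psi>) (of_real ((1 - r^2) / 2) * cis (\<psi> + u))))"
    using stretch_norm2_pos[OF \<open>0 < k\<close>]
    unfolding z PhiM_polar[OF r(1)] backprojE_polar[OF assms(1) r] backproj_integrands_polar[OF r]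
    unfolding k_def[symmetric]
    by (simp add: less_imp_neq[symmetric])
  also have "\<dots> = k * backprojH g z"
    by (simp add: z backprojH_polar[OF r(1)])
  finally have "backprojE (\<lambda>p. muE p powi -2 * gtilde g p) (PhiM z) = k * backprojH g z" .
  moreover have "sqrt (dfun (PhiM z)) = 1 / k"
    by (simp add: z sqrt_dfun_PhiM_polar[OF r] k_def)
  ultimately show ?thesis using \<open>0 < k\<close> by simp
qed

end
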